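(* Let $V$ be a real vector space of dimension $m\ge3$ with a positive definite inner product, and let $R\neq0$ be a Jacobi-Tsankov algebraic curvature tensor on $V$ such that $r(x)<m-1$ for all $x\in V$. Then: \begin{enumerate} \item $r(x)=1$ for every $x\in S(V)$; \item $R$ is Osserman. \end{enumerate}
   Context: An algebraic curvature tensor is $R\in\otimes^4V^*$ satisfying $R(x,y,z,w)=R(z,w,x,y)=-R(y,x,z,w)$ and $R(x,y,z,w)+R(y,z,x,w)+R(z,x,y,w)=0$. The curvature operator $\mathcal{R}(x,y)$ is defined by $\langle\mathcal{R}(x,y)z,w\rangle=R(x,y,z,w)$; the Jacobi operator is $J(x):y\mapsto\mathcal{R}(y,x)x$, and $r(x)=\operatorname{Rank}J(x)$. $S(V)=\{\xi\in V:\langle\xi,\xi\rangle=1\}$. $R$ is Jacobi-Tsankov if $x\perp y$ implies $J(x)J(y)=J(y)J(x)$. $R$ is Osserman if the eigenvalues of $J(x)$ are constant for $x\in S(V)$. *)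

theory Defs
  imports "HOL-Analysis.Analysis"
begin

text \<open>An element of the fourfold tensor product of the dual of V: a real-valued
  function of four vectors, linear in each argument.\<close>
definition multilinear4 :: "('a::real_vector \<Rightarrow> 'a \<Rightarrow> 'a \<Rightarrow> 'a \<Rightarrow> real) \<Rightarrow> bool" where
  "multilinear4 R \<longleftrightarrow>
     (\<forall>y z w. linear (\<lambda>x. R x y z w)) \<and> (\<forall>x z w. linear (\<lambda>y. R x y z w)) \<and>
     (\<forall>x y w. linear (\<lambda>z. R x y z w)) \<and> (\<forall>x y z. linear (\<lambda>w. R x y z w))"

definition alg_curv_tensor :: "('a::real_vector \<Rightarrow> 'a \<Rightarrow> 'a \<Rightarrow> 'a \<Rightarrow> real) \<Rightarrow> bool" where
  "alg_curv_tensor R \<longleftrightarrow> multilinear4 R \<and>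
     (\<forall>x y z w. R x y z w = R z w x y) \<and>
     (\<forall>x y z w. R x y z w = - R y x z w) \<and>
     (\<forall>x y z w. R x y z w + R y z x w + R z x y w = 0)"

text \<open>Curvature operator: the unique vector with inner product R x y z w against w.\<close>
definition curv_op :: "('a::euclidean_space \<Rightarrow> 'a \<Rightarrow> 'a \<Rightarrow> 'a \<Rightarrow> real) \<Rightarrow> 'a \<Rightarrow> 'a \<Rightarrow> 'a \<Rightarrow> 'a" where
  "curv_op R x y z = (\<Sum>b\<in>Basis. R x y z b *\<^sub>R b)"

definition jacobi_op :: "('a::euclidean_space \<Rightarrow> 'a \<Rightarrow> 'a \<Rightarrow> 'a \<Rightarrow> real) \<Rightarrow> 'a \<Rightarrow> 'a \<Rightarrow> 'a" where
  "jacobi_op R x = (\<lambda>y. curv_op R y x x)"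

definition jacobi_rank :: "('a::euclidean_space \<Rightarrow> 'a \<Rightarrow> 'a \<Rightarrow> 'a \<Rightarrow> real) \<Rightarrow> 'a \<Rightarrow> nat" where
  "jacobi_rank R x = dim (range (jacobi_op R x))"

definition unit_sphere :: "'a::euclidean_space set" where
  "unit_sphere = {\<xi>. \<xi> \<bullet> \<xi> = 1}"

definition jacobi_tsankov :: "('a::euclidean_space \<Rightarrow> 'a \<Rightarrow> 'a \<Rightarrow> 'a \<Rightarrow> real) \<Rightarrow> bool" where
  "jacobi_tsankov R \<longleftrightarrow>
     (\<forall>x y. x \<bullet> y = 0 \<longrightarrow> jacobi_op R x \<circ> jacobi_op R y = jacobi_op R y \<circ> jacobi_op R x)"

text \<open>Osserman: the eigenvalues of J(x), counted with multiplicity, are the same for all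
  unit vectors x (J(x) is self-adjoint, so multiplicity = dimension of the eigenspace).\<close>
definition osserman :: "('a::euclidean_space \<Rightarrow> 'a \<Rightarrow> 'a \<Rightarrow> 'a \<Rightarrow> real) \<Rightarrow> bool" where
  "osserman R \<longleftrightarrow>
     (\<forall>x\<in>unit_sphere. \<forall>y\<in>unit_sphere. \<forall>c::real.
        dim {v. jacobi_op R x v = c *\<^sub>R v} = dim {v. jacobi_op R y v = c *\<^sub>R v})"

end

theory Submission
  imports Defs
begin

(* Jacobi-Tsankov says that J(x) and J(y) commute whenever x \<bottom> y. Applied to x + y \<bottom> x - y
   for orthonormal x, y it gives |J(x)y| = |J(y)x|; hence J(x)w = \<lambda>w forces J(w)x = \<lambda>x, and
   eigenvectors of J(x) for different eigenvalues annihilate each other. As r(x) < m - 1, J(x)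
   kills a unit vector y \<bottom> x, and with its help one shows that J(x) has only one nonzero
   eigenvalue \<mu>(x), and that it is simple: J(x) = \<mu>(x) p \<otimes> p, where J(x) \<noteq> 0 because R \<noteq> 0.
   Comparing |J(u)z|^2 = |J(z)u|^2 with J(u)z \<cdot> z = J(z)u \<cdot> u shows \<mu>(u) = \<mu>(z) for orthonormal
   u, z (passing through (u + z)/\<surd>2 when J(u)z = 0), and as m \<ge> 3 any two unit vectors are
   orthogonal to a common third one. *)

section \<open>Self-adjoint and rank-one maps\<close>

lemma linear_coeff_zero_if_quadratic_bound:
  fixes a b :: real
  assumes bound: "\<And>t. 2 * t * a \<le> t * t * b"
  shows "a = 0"
proof -
  define k where "k = \<bar>b\<bar> + 1"
  have k: "k > 0" "b < 2 * k" unfolding k_def by auto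
  have "2 * (a / k) * a \<le> (a / k) * (a / k) * b" by (rule bound)
  then have "a\<^sup>2 * (2 * k - b) \<le> 0" using k by (simp add: field_simps power2_eq_square)
  with k show ?thesis by (simp add: mult_le_0_iff)
qed

lemma inner_sgn_self: "v \<noteq> 0 \<Longrightarrow> sgn v \<bullet> sgn v = (1::real)"
  for v :: "'a::real_inner"
  by (meson norm_eq_1 norm_sgn)

lemma selfadjoint_norm_maximizer_eigen:
  fixes T :: "'a::euclidean_space \<Rightarrow> 'a"
  assumes lin: "linear T" and sym: "\<And>a b. T a \<bullet> b = a \<bullet> T b"
    and v: "v \<bullet> v = 1" and max: "\<And>y. y \<bullet> y = 1 \<Longrightarrow> T y \<bullet> T y \<le> T v \<bullet> T v"
  shows "T (T v) = (T v \<bullet> T v) *\<^sub>R v"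
proof -
  define M where "M = T v \<bullet> T v"
  have max_scaled: "T p \<bullet> T p \<le> M * (p \<bullet> p)" for p
  proof (cases "p = 0")
    case False
    have "T (sgn p) \<bullet> T (sgn p) \<le> M"
      unfolding M_def using max inner_sgn_self[OF False] by blast
    moreover have "T (sgn p) \<bullet> T (sgn p) = (T p \<bullet> T p) / (p \<bullet> p)"
      using False by (simp add: sgn_div_norm linear_scale[OF lin] dot_square_norm field_simps)
    moreover have "p \<bullet> p > 0" using False by simp
    ultimately show ?thesis by (simp add: field_simps)
  qed (simp add: linear_0[OF lin])
  have orth: "T v \<bullet> T w = 0" if wv: "w \<bullet> v = 0" for w
  proof (rule linear_coeff_zero_if_quadratic_bound)
    fix t :: real
    have "T (v + t *\<^sub>R w) \<bullet> T (v + t *\<^sub>R w) \<le> M * ((v + t *\<^sub>R w) \<bullet> (v + t *\<^sub>R w))"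
      by (rule max_scaled)
    then show "2 * t * (T v \<bullet> T w) \<le> t * t * (M * (w \<bullet> w) - T w \<bullet> T w)"
      using v wv unfolding M_def
      by (simp add: linear_add[OF lin] linear_scale[OF lin] inner_add_left inner_add_right
          inner_commute algebra_simps)
  qed
  define w where "w = T (T v) - (T (T v) \<bullet> v) *\<^sub>R v"
  have wv: "w \<bullet> v = 0" unfolding w_def using v by (simp add: inner_diff_left)
  have "T (T v) \<bullet> w = 0" using orth[OF wv] sym[of "T v" w] by simp
  moreover have "w \<bullet> w = T (T v) \<bullet> w - (T (T v) \<bullet> v) * (v \<bullet> w)"
    by (subst (1) w_def) (simp add: inner_diff_left)
  ultimately have "w \<bullet> w = 0" using wv by (simp add: inner_commute)
  then have "w = 0" by simp
  moreover have "T (T v) \<bullet> v = M" unfolding M_def using sym[of "T v" v] by (simp add: inner_commute)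
  ultimately show ?thesis unfolding w_def M_def by simp
qed

lemma selfadjoint_nonzero_eigenvalue:
  fixes T :: "'a::euclidean_space \<Rightarrow> 'a"
  assumes lin: "linear T" and sym: "\<And>a b. T a \<bullet> b = a \<bullet> T b" and nonzero: "T u \<noteq> 0"
  obtains v l where "v \<bullet> v = 1" "l \<noteq> 0" "T v = l *\<^sub>R v"
proof -
  have "u \<noteq> 0" using nonzero linear_0[OF lin] by auto
  then have "sgn u \<in> sphere 0 1" by (simp add: norm_sgn)
  moreover have "bounded_linear T" using lin by (simp add: linear_conv_bounded_linear)
  then have "continuous_on (sphere 0 1) (\<lambda>y. T y \<bullet> T y)"
    by (intro continuous_on_inner linear_continuous_on)
  ultimately obtain v where "v \<in> sphere 0 1" and "\<forall>y\<in>sphere 0 1. T y \<bullet> T y \<le> T v \<bullet> T v"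
    using continuous_attains_sup[OF compact_sphere] by blast
  then have v: "v \<bullet> v = 1" and max: "\<And>y. y \<bullet> y = 1 \<Longrightarrow> T y \<bullet> T y \<le> T v \<bullet> T v"
    by (simp_all add: norm_eq_1)
  define M where "M = T v \<bullet> T v"
  have "M > 0"
  proof -
    have "T (sgn u) \<noteq> 0"
      using nonzero \<open>u \<noteq> 0\<close> by (simp add: sgn_div_norm linear_scale[OF lin])
    then have "0 < T (sgn u) \<bullet> T (sgn u)" by simp
    also have "\<dots> \<le> M" unfolding M_def by (rule max) (rule inner_sgn_self[OF \<open>u \<noteq> 0\<close>])
    finally show ?thesis .
  qed
  define r where "r = sqrt M"
  have r: "r > 0" "r * r = M" unfolding r_def using \<open>M > 0\<close> by simp_all
  have TTv: "T (T v) = M *\<^sub>R v"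
    unfolding M_def by (rule selfadjoint_norm_maximizer_eigen[OF lin sym v max])
  \<comment> \<open>As T (T v) = r * r * v, either T v + r v is an eigenvector for r, or v is one for -r.\<close>
  define a where "a = T v + r *\<^sub>R v"
  show thesis
  proof (cases "a = 0")
    case True
    then have "T v = (- r) *\<^sub>R v" unfolding a_def by (simp add: eq_neg_iff_add_eq_0)
    with v r show thesis by (intro that[of v "- r"]) auto
  next
    case False
    have "T a = r *\<^sub>R a"
      unfolding a_def using TTv r
        by (simp add: linear_add[OF lin] linear_scale[OF lin] algebra_simps)
    then have "T (sgn a) = r *\<^sub>R sgn a" by (simp add: sgn_div_norm linear_scale[OF lin])
    with inner_sgn_self[OF False] r show thesis by (intro that[of "sgn a" r]) auto
  qed
qed

lemma selfadjoint_kernel_orthogonal: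
  fixes T :: "'a::euclidean_space \<Rightarrow> 'a"
  assumes lin: "linear T" and sym: "\<And>a b. T a \<bullet> b = a \<bullet> T b"
    and rank: "dim (range T) < DIM('a) - 1"
  obtains y where "y \<bullet> y = 1" "x \<bullet> y = 0" "T y = 0"
proof -
  have "dim (insert x (range T)) < DIM('a)"
    using rank by (auto simp: dim_insert)
  then obtain y where "y \<noteq> 0" and y_orth: "\<And>z. z \<in> span (insert x (range T)) \<Longrightarrow> orthogonal y z"
    using orthogonal_to_subspace_exists by blast
  have "x \<bullet> y = 0" using y_orth[of x] by (simp add: span_base orthogonal_def inner_commute)
  moreover have "T y \<bullet> T y = 0"
    using y_orth[of "T (T y)"] sym[of y "T y"] by (simp add: span_base orthogonal_def)
  ultimately show thesis
    using \<open>y \<noteq> 0\<close> inner_sgn_self[of y] that[of "sgn y"]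
      by (simp add: sgn_div_norm linear_scale[OF lin])
qed

lemma rank_one_map_range_dim:
  fixes p :: "'a::euclidean_space"
  assumes "p \<noteq> 0" "m \<noteq> 0"
  shows "dim (range (\<lambda>v. (m * (v \<bullet> p)) *\<^sub>R p)) = 1"
proof -
  have "range (\<lambda>v. (m * (v \<bullet> p)) *\<^sub>R p) \<subseteq> span {p}"
    by (auto intro: span_mul span_base)
  moreover have "p \<in> range (\<lambda>v. (m * (v \<bullet> p)) *\<^sub>R p)"
  proof
    show "p = (m * ((inverse (m * (p \<bullet> p)) *\<^sub>R p) \<bullet> p)) *\<^sub>R p" using assms
      by (simp add: field_simps)
  qed simp
  ultimately show ?thesis
    using dim_mono[of _ "{p}"] dim_subset[of "{p}"] assms by (simp add: le_antisym)
qed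

lemma rank_one_map_eigenspace_dim:
  fixes p :: "'a::euclidean_space"
  assumes p: "p \<bullet> p = 1" and "m \<noteq> 0"
  shows "dim {v. (m * (v \<bullet> p)) *\<^sub>R p = c *\<^sub>R v} =
    (if c = 0 then DIM('a) - 1 else if c = m then 1 else 0)"
proof -
  have "p \<noteq> 0" using p by auto
  consider "c = 0" | "c = m" "c \<noteq> 0" | "c \<noteq> 0" "c \<noteq> m" by blast
  then show ?thesis
  proof cases
    case 1
    then have "{v. (m * (v \<bullet> p)) *\<^sub>R p = c *\<^sub>R v} = {v. p \<bullet> v = 0}"
      using \<open>m \<noteq> 0\<close> \<open>p \<noteq> 0\<close> by (auto simp: inner_commute)
    then show ?thesis using 1 dim_hyperplane[OF \<open>p \<noteq> 0\<close>] by simp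
  next
    case 2
    have "{v. (m * (v \<bullet> p)) *\<^sub>R p = c *\<^sub>R v} = span {p}"
    proof (intro subset_antisym subsetI)
      fix v assume "v \<in> {v. (m * (v \<bullet> p)) *\<^sub>R p = c *\<^sub>R v}"
      then have "m *\<^sub>R v = m *\<^sub>R ((v \<bullet> p) *\<^sub>R p)" using 2 by simp
      then have "v = (v \<bullet> p) *\<^sub>R p" using 2 scaleR_cancel_left by blast
      then show "v \<in> span {p}" by (metis span_base span_mul singletonI)
    next
      fix v assume "v \<in> span {p}"
      then show "v \<in> {v. (m * (v \<bullet> p)) *\<^sub>R p = c *\<^sub>R v}"
        using 2 p by (auto simp: span_singleton)
    qed
    then show ?thesis using 2 \<open>p \<noteq> 0\<close> by simp
  next
    case 3
    have "{v. (m * (v \<bullet> p)) *\<^sub>R p = c *\<^sub>R v} = {0}"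
    proof (intro set_eqI iffI)
      fix v assume v: "v \<in> {v. (m * (v \<bullet> p)) *\<^sub>R p = c *\<^sub>R v}"
      then have "((m * (v \<bullet> p)) *\<^sub>R p) \<bullet> p = (c *\<^sub>R v) \<bullet> p" by simp
      then have "v \<bullet> p = 0" using p 3 by simp
      then show "v \<in> {0}" using v 3 by simp
    qed simp
    then show ?thesis using 3 by simp
  qed
qed

section \<open>Algebraic curvature tensors\<close>

locale curvature_tensor =
  fixes R :: "'a::euclidean_space \<Rightarrow> 'a \<Rightarrow> 'a \<Rightarrow> 'a \<Rightarrow> real"
  assumes alg_curv: "alg_curv_tensor R"
begin

abbreviation J :: "'a \<Rightarrow> 'a \<Rightarrow> 'a" where
  "J \<equiv> jacobi_op R"

definition polar_jacobi :: "'a \<Rightarrow> 'a \<Rightarrow> 'a \<Rightarrow> 'a" where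
  "polar_jacobi a b v = curv_op R v a b + curv_op R v b a"

lemma multilinear: "multilinear4 R"
  using alg_curv unfolding alg_curv_tensor_def by blast

lemma linear_R1: "linear (\<lambda>x. R x y z w)" and linear_R2: "linear (\<lambda>y. R x y z w)"
  and linear_R3: "linear (\<lambda>z. R x y z w)" and linear_R4: "linear (\<lambda>w. R x y z w)"
  using multilinear unfolding multilinear4_def by blast+

lemmas R_linear_simps [simp] =
  linear_R1[THEN linear_add] linear_R1[THEN linear_diff] linear_R1[THEN linear_scale]
  linear_R1[THEN linear_neg] linear_R1[THEN linear_0]
  linear_R2[THEN linear_add] linear_R2[THEN linear_diff] linear_R2[THEN linear_scale]
  linear_R2[THEN linear_neg] linear_R2[THEN linear_0]
  linear_R3[THEN linear_add] linear_R3[THEN linear_diff] linear_R3[THEN linear_scale]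
  linear_R3[THEN linear_neg] linear_R3[THEN linear_0]
  linear_R4[THEN linear_add] linear_R4[THEN linear_diff] linear_R4[THEN linear_scale]
  linear_R4[THEN linear_neg] linear_R4[THEN linear_0]

lemma R_pair_swap: "R x y z w = R z w x y"
  and R_antisym_left: "R x y z w = - R y x z w"
  and R_bianchi: "R x y z w + R y z x w + R z x y w = 0"
  using alg_curv unfolding alg_curv_tensor_def by blast+

lemma R_antisym_right: "R x y z w = - R x y w z"
  using R_pair_swap[of x y z w] R_antisym_left[of z w x y] R_pair_swap[of w z x y] by simp

lemma R_diag_left [simp]: "R x x z w = 0"
  using R_antisym_left[of x x z w] by simp

lemma R_diag_right [simp]: "R x y z z = 0"
  using R_antisym_right[of x y z z] by simp

lemma R_symmetric_middle: "R a x y b = R b y x a"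
  using R_pair_swap[of a x y b] R_antisym_left[of y b a x] R_antisym_right[of b y a x] by simp

lemma curv_op_inner [simp]: "curv_op R x y z \<bullet> w = R x y z w"
proof -
  have "curv_op R x y z \<bullet> w = (\<Sum>b\<in>Basis. R x y z b * (b \<bullet> w))"
    unfolding curv_op_def by (simp add: inner_sum_left)
  also have "\<dots> = (\<Sum>b\<in>Basis. R x y z ((w \<bullet> b) *\<^sub>R b))"
    by (simp add: inner_commute mult.commute)
  also have "\<dots> = R x y z (\<Sum>b\<in>Basis. (w \<bullet> b) *\<^sub>R b)"
    by (rule linear_sum[OF linear_R4, symmetric])
  finally show ?thesis by (simp add: euclidean_representation)
qed

lemma jacobi_op_inner [simp]: "J x v \<bullet> w = R v x x w"
  unfolding jacobi_op_def by simp

lemma polar_jacobi_inner [simp]: "polar_jacobi a b v \<bullet> w = R v a b w + R v b a w"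
  unfolding polar_jacobi_def by (simp add: inner_add_left)

lemma linear_jacobi_op: "linear (J x)"
  by (rule linearI; rule euclidean_eqI) (simp_all add: inner_add_left)

lemma linear_polar_jacobi: "linear (polar_jacobi a b)"
  by (rule linearI; rule euclidean_eqI) (simp_all add: inner_add_left algebra_simps)

lemmas jacobi_op_linear_simps [simp] =
  linear_jacobi_op[THEN linear_add] linear_jacobi_op[THEN linear_diff]
  linear_jacobi_op[THEN linear_scale] linear_jacobi_op[THEN linear_neg]
  linear_jacobi_op[THEN linear_0]
  linear_polar_jacobi[THEN linear_add] linear_polar_jacobi[THEN linear_diff]
  linear_polar_jacobi[THEN linear_scale] linear_polar_jacobi[THEN linear_neg]
  linear_polar_jacobi[THEN linear_0]

lemma jacobi_op_symmetric: "J x a \<bullet> b = a \<bullet> J x b"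
  using R_symmetric_middle[of a x x b] inner_commute[of a "J x b"] by simp

lemma polar_jacobi_symmetric: "polar_jacobi x y a \<bullet> b = a \<bullet> polar_jacobi x y b"
  using R_symmetric_middle[of a x y b] R_symmetric_middle[of a y x b]
    inner_commute[of a "polar_jacobi x y b"] by simp

lemma jacobi_op_self [simp]: "J x x = 0"
  by (rule euclidean_eqI) simp

lemma inner_jacobi_op_self [simp]: "J x v \<bullet> x = 0" "x \<bullet> J x v = 0"
  by (simp_all add: inner_commute[of x])

lemma jacobi_op_zero [simp]: "J 0 v = 0"
  by (rule euclidean_eqI) simp

lemma jacobi_op_inner_swap: "J x w \<bullet> w = J w x \<bullet> x"
  using R_pair_swap[of w x x w] by simp

lemma polar_jacobi_self_left: "polar_jacobi x y x = - J x y"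
  by (rule euclidean_eqI) (simp add: R_antisym_left[of x y x])

lemma polar_jacobi_self_right: "polar_jacobi x y y = - J y x"
  by (rule euclidean_eqI) (simp add: R_antisym_left[of y x y])

lemma jacobi_op_add: "J (a + b) v = J a v + polar_jacobi a b v + J b v"
  by (rule euclidean_eqI) (simp add: inner_add_left)

lemma jacobi_op_diff: "J (a - b) v = J a v - polar_jacobi a b v + J b v"
  by (rule euclidean_eqI) (simp add: inner_add_left inner_diff_left)

lemma jacobi_op_scale: "J (c *\<^sub>R a) v = (c * c) *\<^sub>R J a v"
  by (rule euclidean_eqI) simp

lemma R_zero_if_diagonal_zero:
  assumes diag: "\<And>y w. R x y y w = 0"
  shows "R x y z w = 0"
proof -
  have anti: "R x b c d = - R x c b d" for b c d
    using diag[of "b + c" d] diag[of b d] diag[of c d] by simp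
  have cyclic: "R x b c d = R x c d b" for b c d
    using anti[of b c d] R_antisym_right[of x c b d] by simp
  have "R y z x w = R x y z w"
    using R_pair_swap[of y z x w] cyclic[of w y z] cyclic[of y z w] by simp
  moreover have "R z x y w = R x y z w"
    using R_antisym_left[of z x y w] anti[of y z w] by simp
  ultimately show ?thesis using R_bianchi[of x y z w] by simp
qed

lemma jacobi_op_translate:
  assumes "\<And>b c d. R x b c d = 0"
  shows "J (p + t *\<^sub>R x) = J p"
proof (rule ext, rule euclidean_eqI)
  fix v w :: 'a
  have "R v p x w = 0" "R v x p w = 0" "R v x x w = 0"
    using R_pair_swap[of v p x w] R_symmetric_middle[of v x p w] R_pair_swap[of w p x v]
      R_pair_swap[of v x x w] assms by simp_all
  then show "J (p + t *\<^sub>R x) v \<bullet> w = J p v \<bullet> w" by simp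
qed

lemma R_zero_if_jacobi_ops_commute:
  assumes comm: "\<And>a b v. J a (J b v) = J b (J a v)"
  shows "R = (\<lambda>x y z w. 0)"
proof -
  \<comment> \<open>J (u + w) u = J w u - J u w, and J u kills both J (u + w) u and J w u.\<close>
  have "J u (J u w) = 0" for u w
  proof -
    have "J u (J (u + w) u) = 0" "J u (J w u) = 0" using comm[of u _ u] by simp_all
    then show ?thesis by (simp add: jacobi_op_add polar_jacobi_self_left)
  qed
  then have "J u w = 0" for u w
    using jacobi_op_symmetric[of u w "J u w"] by (metis inner_zero_right inner_eq_zero_iff)
  then have "R a y y w = 0" for a y w
    by (metis jacobi_op_inner inner_zero_left)
  then show ?thesis using R_zero_if_diagonal_zero by blast
qed

definition jacobi_rank_one :: "'a \<Rightarrow> real \<Rightarrow> 'a \<Rightarrow> bool" where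
  "jacobi_rank_one x \<mu> p \<longleftrightarrow> p \<bullet> p = 1 \<and> \<mu> \<noteq> 0 \<and> J x = (\<lambda>v. (\<mu> * (v \<bullet> p)) *\<^sub>R p)"

lemma jacobi_rank_one_apply: "jacobi_rank_one x \<mu> p \<Longrightarrow> J x v = (\<mu> * (v \<bullet> p)) *\<^sub>R p"
  unfolding jacobi_rank_one_def by simp

lemma jacobi_rank_one_eigen: "jacobi_rank_one x \<mu> p \<Longrightarrow> J x p = \<mu> *\<^sub>R p"
  unfolding jacobi_rank_one_def by simp

lemma jacobi_rank_one_orthogonal:
  assumes "jacobi_rank_one x \<mu> p"
  shows "x \<bullet> p = 0"
proof -
  have "(\<mu> * (x \<bullet> p)) *\<^sub>R p = 0" using jacobi_rank_one_apply[OF assms, of x] by simp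
  then show ?thesis using assms unfolding jacobi_rank_one_def by auto
qed

lemma jacobi_rank_one_norm:
  assumes "jacobi_rank_one x \<mu> p"
  shows "J x v \<bullet> J x v = \<mu> * (J x v \<bullet> v)"
  using jacobi_rank_one_apply[OF assms, of v] assms unfolding jacobi_rank_one_def
  by (simp add: inner_commute)

end

section \<open>Jacobi-Tsankov tensors\<close>

locale jacobi_tsankov_tensor = curvature_tensor +
  assumes tsankov: "jacobi_tsankov R"
begin

declare curv_op_inner [simp del] jacobi_op_inner [simp del] polar_jacobi_inner [simp del]

lemma jacobi_op_commute:
  assumes "x \<bullet> y = 0"
  shows "J x (J y v) = J y (J x v)"
  using tsankov assms unfolding jacobi_tsankov_def by (metis comp_apply)

lemma jacobi_op_commute_polar:
  assumes "x \<bullet> a = 0" "x \<bullet> b = 0"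
  shows "J x (polar_jacobi a b v) = polar_jacobi a b (J x v)"
proof -
  have polar: "2 *\<^sub>R polar_jacobi a b u = J (a + b) u - J (a - b) u" for u
    by (simp add: jacobi_op_add jacobi_op_diff scaleR_2)
  have sum: "x \<bullet> (a + b) = 0" and diff: "x \<bullet> (a - b) = 0"
    using assms by (simp_all add: inner_add_right inner_diff_right)
  have "J x (2 *\<^sub>R polar_jacobi a b v) = 2 *\<^sub>R polar_jacobi a b (J x v)"
    unfolding polar using jacobi_op_commute[OF sum] jacobi_op_commute[OF diff] by simp
  then show ?thesis by simp
qed

lemma polar_jacobi_rotation:
  assumes "x \<bullet> y = 0" "x \<bullet> x = y \<bullet> y"
  shows "polar_jacobi x y (J x v + J y v) = J x (polar_jacobi x y v) + J y (polar_jacobi x y v)"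
proof -
  \<comment> \<open>With A = J x + J y and P = polar_jacobi x y we have J (x \<plusminus> y) = A \<plusminus> P,
    and (A + P) (A - P) = (A - P) (A + P) says exactly P A = A P.\<close>
  have "(x + y) \<bullet> (x - y) = 0"
    using assms inner_commute[of y x] by (simp add: inner_add_left inner_diff_right)
  then have "J (x + y) (J (x - y) v) = J (x - y) (J (x + y) v)" by (rule jacobi_op_commute)
  moreover have "J (x + y) (J (x - y) v) - J (x - y) (J (x + y) v)
      = 2 *\<^sub>R (polar_jacobi x y (J x v + J y v)
                  - (J x (polar_jacobi x y v) + J y (polar_jacobi x y v)))"
    by (simp add: jacobi_op_add jacobi_op_diff algebra_simps scaleR_2)
  ultimately show ?thesis by simp
qed

lemma jacobi_swap_norm_eq:
  assumes "x \<bullet> w = 0" "x \<bullet> x = w \<bullet> w"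
  shows "J w x \<bullet> J w x = J x w \<bullet> J x w"
proof -
  have "polar_jacobi x w (J w x) = - J x (J x w) - J w (J x w)"
    using polar_jacobi_rotation[OF assms, of x] by (simp add: polar_jacobi_self_left)
  then have "polar_jacobi x w (J w x) \<bullet> w = (- J x (J x w) - J w (J x w)) \<bullet> w" by simp
  then show ?thesis
    by (simp add: polar_jacobi_symmetric polar_jacobi_self_right inner_diff_left
        jacobi_op_symmetric)
qed

lemma jacobi_swap_norm:
  assumes "x \<bullet> w = 0"
  shows "(x \<bullet> x) * (J w x \<bullet> J w x) = (w \<bullet> w) * (J x w \<bullet> J x w)"
proof (cases "x = 0 \<or> w = 0")
  case False
  define c where "c = sqrt ((x \<bullet> x) / (w \<bullet> w))"
  have "c > 0" unfolding c_def using False by simp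
  have c: "(c * c) * (w \<bullet> w) = x \<bullet> x" unfolding c_def using False by simp
  have "J (c *\<^sub>R w) x \<bullet> J (c *\<^sub>R w) x = J x (c *\<^sub>R w) \<bullet> J x (c *\<^sub>R w)"
    using assms c by (intro jacobi_swap_norm_eq) simp_all
  then have "(c * c) * ((c * c) * (J w x \<bullet> J w x)) = (c * c) * (J x w \<bullet> J x w)"
    by (simp add: jacobi_op_scale algebra_simps)
  then have "(c * c) * (J w x \<bullet> J w x) = J x w \<bullet> J x w" using \<open>c > 0\<close> by simp
  then show ?thesis by (simp flip: c add: algebra_simps)
qed auto

lemma jacobi_swap_kernel:
  assumes "x \<bullet> w = 0" "x \<noteq> 0" "J x w = 0"
  shows "J w x = 0"
  using jacobi_swap_norm[OF assms(1)] assms(2,3) by simp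

lemma jacobi_swap_eigen:
  assumes "x \<bullet> w = 0" "x \<bullet> x = w \<bullet> w" and eigen: "J x w = l *\<^sub>R w"
  shows "J w x = l *\<^sub>R x"
proof -
  have "J w x \<bullet> J w x = l * l * (w \<bullet> w)" using jacobi_swap_norm_eq[OF assms(1,2)] eigen by simp
  moreover have "J w x \<bullet> x = l * (w \<bullet> w)" using jacobi_op_inner_swap[of x w] eigen by simp
  ultimately have "(J w x - l *\<^sub>R x) \<bullet> (J w x - l *\<^sub>R x) = 0"
    using assms(2) by (simp add: inner_diff_left inner_diff_right inner_commute algebra_simps)
  then show ?thesis by simp
qed

lemma jacobi_op_eigenvectors_annihilate:
  assumes "x \<bullet> z = 0" "x \<bullet> z' = 0" "J x z = l *\<^sub>R z" "J x z' = n *\<^sub>R z'" "l \<noteq> n"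
  shows "J z z' = 0"
proof -
  have "J x (J z z') = n *\<^sub>R J z z'"
    using jacobi_op_commute[OF assms(1), of z'] assms(4) by simp
  moreover have "J x (J z z') = l *\<^sub>R J z z'"
    using jacobi_op_commute_polar[OF assms(1,2), of z] assms(3)
      by (simp add: polar_jacobi_self_left)
  ultimately have "(l - n) *\<^sub>R J z z' = 0" by (simp add: algebra_simps)
  then show ?thesis using assms(5) by simp
qed

lemma R_zero_if_jacobi_op_zero:
  assumes x: "x \<bullet> x = 1" and zero: "\<And>v. J x v = 0"
  shows "R = (\<lambda>x y z w. 0)"
proof -
  have "x \<noteq> 0" using x by auto
  have "R x y y w = 0" for y w
  proof -
    define y' where "y' = y - (y \<bullet> x) *\<^sub>R x"
    have "x \<bullet> y' = 0" unfolding y'_def using x by (simp add: inner_diff_right inner_commute)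
    then have "J y' x = 0" using jacobi_swap_kernel \<open>x \<noteq> 0\<close> zero by blast
    then have "R x y' y' w = 0" by (metis jacobi_op_inner inner_zero_left)
    moreover have "R x y x w = 0"
      using R_antisym_left[of x y x w] jacobi_op_inner[of x y w] zero[of y] by simp
    ultimately show ?thesis unfolding y'_def by simp
  qed
  then have slot_zero: "R x b c d = 0" for b c d by (rule R_zero_if_diagonal_zero)
  \<comment> \<open>Translating along x does not change Jacobi operators, and makes any two vectors orthogonal.\<close>
  have "J a (J b v) = J b (J a v)" for a b v
  proof -
    define a' where "a' = a + (1 - a \<bullet> x) *\<^sub>R x"
    define b' where "b' = b + (- (a' \<bullet> b)) *\<^sub>R x"
    have "a' \<bullet> x = 1" unfolding a'_def using x by (simp add: inner_add_left)
    then have "a' \<bullet> b' = 0" unfolding b'_def by (simp add: inner_add_right inner_diff_right)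
    then have "J a' (J b' v) = J b' (J a' v)" by (rule jacobi_op_commute)
    then show ?thesis unfolding a'_def b'_def jacobi_op_translate[OF slot_zero] .
  qed
  then show ?thesis by (rule R_zero_if_jacobi_ops_commute)
qed

lemma polar_jacobi_eigenvectors_kernel:
  assumes x: "x \<bullet> x = 1" and z': "z' \<bullet> z' = 1"
    and orth: "x \<bullet> z = 0" "x \<bullet> z' = 0" "x \<bullet> y = 0" "z' \<bullet> z = 0" "z' \<bullet> y = 0"
    and eigen: "J x z' = m *\<^sub>R z'" "J x y = 0" and "m \<noteq> 0"
  shows "polar_jacobi z y z' = 0"
proof -
  define w where "w = polar_jacobi z y z'"
  have "J z' y = 0"
    using jacobi_op_eigenvectors_annihilate[OF orth(2,3) eigen(1), of 0] eigen(2) \<open>m \<noteq> 0\<close> by simp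
  then have "R z' z y z' = 0" "R z' y z z' = 0"
    using R_pair_swap[of z' z y z'] R_pair_swap[of z' y z z'] jacobi_op_inner[of z' y z]
      jacobi_op_symmetric[of z' z y] jacobi_op_inner[of z' z y] by simp_all
  then have "z' \<bullet> w = 0" unfolding w_def by (simp add: inner_commute[of z'] polar_jacobi_inner)
  moreover have "J z' w = 0" unfolding w_def using jacobi_op_commute_polar[OF orth(4,5)] by simp
  moreover have "J z' x = m *\<^sub>R x" using jacobi_swap_eigen[OF orth(2) _ eigen(1)] x z' by simp
  ultimately have "J x w = 0"
    using jacobi_op_eigenvectors_annihilate[of z' x w m 0] orth(2) \<open>m \<noteq> 0\<close>
      by (simp add: inner_commute)
  moreover have "J x w = m *\<^sub>R w" unfolding w_def
    using jacobi_op_commute_polar[OF orth(1,3)] eigen(1) by simp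
  ultimately show ?thesis using \<open>m \<noteq> 0\<close> unfolding w_def by simp
qed

lemma jacobi_op_same_eigenvalue_annihilate:
  assumes x: "x \<bullet> x = 1" and y: "y \<bullet> y = 1" and z: "z \<bullet> z = 1" and z': "z' \<bullet> z' = 1"
    and orth: "x \<bullet> z = 0" "x \<bullet> z' = 0" "x \<bullet> y = 0" "z \<bullet> z' = 0" "z \<bullet> y = 0" "z' \<bullet> y = 0"
    and eigen: "J x z = m *\<^sub>R z" "J x z' = m *\<^sub>R z'" "J x y = 0" and "m \<noteq> 0"
  shows "J z z' = 0"
proof -
  \<comment> \<open>Adding y changes neither J z z' nor J z' z but doubles squared lengths, so the swap
    identity forces |J z z'|^2 = 2 |J z' z|^2 and |J z' z|^2 = 2 |J z z'|^2.\<close>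
  have orth': "z' \<bullet> z = 0" using orth(4) by (simp add: inner_commute)
  have "polar_jacobi z y z' = 0" "polar_jacobi z' y z = 0"
    using polar_jacobi_eigenvectors_kernel[OF x z' orth(1-3) orth' orth(6) eigen(2,3) \<open>m \<noteq> 0\<close>]
      polar_jacobi_eigenvectors_kernel[OF x z orth(2,1,3) orth(4,5) eigen(1,3) \<open>m \<noteq> 0\<close>]
    by simp_all
  moreover have "J y z = 0" "J y z' = 0" "J z y = 0" "J z' y = 0"
    using jacobi_op_eigenvectors_annihilate[of x y z 0 m]
      jacobi_op_eigenvectors_annihilate[of x y z' 0 m]
      jacobi_op_eigenvectors_annihilate[of x z y m 0]
      jacobi_op_eigenvectors_annihilate[of x z' y m 0]
      orth eigen \<open>m \<noteq> 0\<close> by simp_all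
  ultimately have "J (z + y) z' = J z z'" "J z' (z + y) = J z' z"
    "J (z' + y) z = J z' z" "J z (z' + y) = J z z'"
    by (simp_all add: jacobi_op_add)
  moreover have "(z + y) \<bullet> (z + y) = 2" "(z' + y) \<bullet> (z' + y) = 2"
    using y z z' orth(5,6) by (simp_all add: inner_add_left inner_add_right inner_commute)
  moreover have "z' \<bullet> (z + y) = 0" "z \<bullet> (z' + y) = 0"
    using orth' orth(4-6) by (simp_all add: inner_add_right)
  ultimately have "J z z' \<bullet> J z z' = 2 * (J z' z \<bullet> J z' z)"
    "J z' z \<bullet> J z' z = 2 * (J z z' \<bullet> J z z')"
    using jacobi_swap_norm[of z' "z + y"] jacobi_swap_norm[of z "z' + y"] z z' by simp_all
  then have "J z z' \<bullet> J z z' = 0" by simp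
  then show ?thesis by simp
qed

lemma jacobi_op_second_eigenvalue_zero:
  assumes x: "x \<bullet> x = 1" and y: "y \<bullet> y = 1" and z: "z \<bullet> z = 1" and z': "z' \<bullet> z' = 1"
    and orth: "x \<bullet> z = 0" "x \<bullet> z' = 0" "x \<bullet> y = 0" "z \<bullet> z' = 0" "z \<bullet> y = 0" "z' \<bullet> y = 0"
    and eigen: "J x z = m *\<^sub>R z" "J x z' = n *\<^sub>R z'" "J x y = 0" and "m \<noteq> 0"
  shows "n = 0"
proof -
  have "J z z' = 0"
  proof (cases "n = m")
    case True
    then show ?thesis
      using jacobi_op_same_eigenvalue_annihilate[OF x y z z' orth eigen(1) _ eigen(3)]
        eigen(2) \<open>m \<noteq> 0\<close> by simp
  next
    case False
    then show ?thesis using jacobi_op_eigenvectors_annihilate[OF orth(1,2) eigen(1,2)] by simp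
  qed
  moreover have "J z x = m *\<^sub>R x" using jacobi_swap_eigen[OF orth(1) _ eigen(1)] x z by simp
  ultimately have "J x z' = 0"
    using jacobi_op_eigenvectors_annihilate[of z x z' m 0] orth(1,4) \<open>m \<noteq> 0\<close>
      by (simp add: inner_commute)
  then show ?thesis using eigen(2) z' by auto
qed

lemma rank_one_eigenvalue_eq_if_inner_nonzero:
  assumes "u \<bullet> u = 1" "z \<bullet> z = 1" "u \<bullet> z = 0"
    and u: "jacobi_rank_one u \<mu> p" and z: "jacobi_rank_one z \<nu> q" and "J u z \<bullet> z \<noteq> 0"
  shows "\<mu> = \<nu>"
proof -
  have "\<mu> * (J u z \<bullet> z) = J u z \<bullet> J u z" by (simp add: jacobi_rank_one_norm[OF u])
  also have "\<dots> = J z u \<bullet> J z u" using jacobi_swap_norm_eq[of u z] assms(1-3) by simp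
  also have "\<dots> = \<nu> * (J u z \<bullet> z)" by (simp add: jacobi_rank_one_norm[OF z] jacobi_op_inner_swap)
  finally show ?thesis using \<open>J u z \<bullet> z \<noteq> 0\<close> by simp
qed

end

section \<open>Jacobi-Tsankov tensors of low rank\<close>

locale low_rank_jacobi_tsankov_tensor = jacobi_tsankov_tensor +
  assumes R_nonzero: "R \<noteq> (\<lambda>x y z w. 0)"
    and rank_bound: "\<forall>x. jacobi_rank R x < DIM('a) - 1"
begin

lemma jacobi_kernel_vector:
  obtains y where "y \<bullet> y = 1" "x \<bullet> y = 0" "J x y = 0"
  using selfadjoint_kernel_orthogonal[OF linear_jacobi_op jacobi_op_symmetric] rank_bound
  unfolding jacobi_rank_def by blast

lemma jacobi_rank_one_exists:
  assumes x: "x \<bullet> x = 1"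
  obtains \<mu> p where "jacobi_rank_one x \<mu> p"
proof -
  obtain u where "J x u \<noteq> 0" using R_zero_if_jacobi_op_zero[OF x] R_nonzero by blast
  then obtain z m where z: "z \<bullet> z = 1" and "m \<noteq> 0" and eigen_z: "J x z = m *\<^sub>R z"
    using selfadjoint_nonzero_eigenvalue[OF linear_jacobi_op jacobi_op_symmetric] by blast
  obtain y where y: "y \<bullet> y = 1" "x \<bullet> y = 0" "J x y = 0" by (rule jacobi_kernel_vector)
  have "m * (x \<bullet> z) = 0" using eigen_z inner_jacobi_op_self(2)[of x z] by simp
  then have xz: "x \<bullet> z = 0" using \<open>m \<noteq> 0\<close> by simp
  have "m * (z \<bullet> y) = J x z \<bullet> y" using eigen_z by simp
  also have "\<dots> = 0" using jacobi_op_symmetric[of x z y] y(3) by simp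
  finally have zy: "z \<bullet> y = 0" using \<open>m \<noteq> 0\<close> by simp
  define T where "T v = J x v - (m * (v \<bullet> z)) *\<^sub>R z" for v
  have "linear T" unfolding T_def by (rule linearI) (simp_all add: inner_add_left algebra_simps)
  have T_sym: "T a \<bullet> b = a \<bullet> T b" for a b
    unfolding T_def using jacobi_op_symmetric[of x a b]
      by (simp add: inner_diff_left inner_diff_right inner_commute)
  have "T v = 0" for v
  proof (rule ccontr)
    assume "T v \<noteq> 0"
    then obtain z' n where z': "z' \<bullet> z' = 1" and "n \<noteq> 0" and eigen_z': "T z' = n *\<^sub>R z'"
      using selfadjoint_nonzero_eigenvalue[OF \<open>linear T\<close> T_sym] by blast
    have orth: "q \<bullet> z' = 0" if "T q = 0" for q
    proof -
      have "n * (q \<bullet> z') = T q \<bullet> z'" using eigen_z' T_sym[of q z'] by simp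
      then show ?thesis using that \<open>n \<noteq> 0\<close> by simp
    qed
    have "x \<bullet> z' = 0" by (rule orth) (simp add: T_def xz inner_commute)
    moreover have "z \<bullet> z' = 0" by (rule orth) (simp add: T_def eigen_z z)
    moreover have "y \<bullet> z' = 0" by (rule orth) (simp add: T_def y(3) zy inner_commute[of y z])
    moreover from calculation have "J x z' = n *\<^sub>R z'" using eigen_z'
      by (simp add: T_def inner_commute)
    ultimately have "n = 0"
      using jacobi_op_second_eigenvalue_zero[OF x y(1) z z' xz _ y(2) _ zy, of m n]
        eigen_z y(3) \<open>m \<noteq> 0\<close> by (simp add: inner_commute)
    then show False using \<open>n \<noteq> 0\<close> by simp
  qed
  then have "jacobi_rank_one x m z"
    unfolding jacobi_rank_one_def using z \<open>m \<noteq> 0\<close> by (auto simp: T_def)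
  then show thesis by (rule that)
qed

lemma rank_one_eigenvalue_eq_in_kernel_plane:
  assumes p: "p \<bullet> p = 1" and q: "q \<bullet> q = 1" and pq: "p \<bullet> q = 0" "J p q = 0"
    and u: "u = c *\<^sub>R p + s *\<^sub>R q" "u \<bullet> u = 1" "c \<noteq> 0"
    and rank_one_p: "jacobi_rank_one p \<mu> f" and rank_one_u: "jacobi_rank_one u \<nu> g"
  shows "\<nu> = \<mu>"
proof -
  \<comment> \<open>Compare both eigenvalues with that of the eigenvector f of J p.\<close>
  have f: "f \<bullet> f = 1" and "\<mu> \<noteq> 0" using rank_one_p unfolding jacobi_rank_one_def by auto
  have pf: "p \<bullet> f = 0" by (rule jacobi_rank_one_orthogonal[OF rank_one_p])
  have eigen_f: "J p f = \<mu> *\<^sub>R f" by (rule jacobi_rank_one_eigen[OF rank_one_p])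
  have "\<mu> * (f \<bullet> q) = f \<bullet> J p q" using eigen_f jacobi_op_symmetric[of p f q] by simp
  then have fq: "f \<bullet> q = 0" using pq(2) \<open>\<mu> \<noteq> 0\<close> by simp
  have "J f p = \<mu> *\<^sub>R p" using jacobi_swap_eigen[OF pf _ eigen_f] p f by simp
  moreover have "J f q = 0"
    using jacobi_op_eigenvectors_annihilate[OF pf pq(1) eigen_f, of 0] pq(2) \<open>\<mu> \<noteq> 0\<close> by simp
  ultimately have "J f u = (c * \<mu>) *\<^sub>R p" unfolding u(1) by simp
  then have "J u f \<bullet> f = c * c * \<mu>"
    using jacobi_op_inner_swap[of u f] p pq(1) unfolding u(1) by (simp add: inner_add_right)
  obtain \<kappa> h where rank_one_f: "jacobi_rank_one f \<kappa> h" using jacobi_rank_one_exists[OF f] .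
  have "\<mu> = \<kappa>"
    using rank_one_eigenvalue_eq_if_inner_nonzero[OF p f pf rank_one_p rank_one_f]
      eigen_f f \<open>\<mu> \<noteq> 0\<close> by simp
  moreover have "u \<bullet> f = 0" unfolding u(1) using pf fq
    by (simp add: inner_add_left inner_commute[of q f])
  then have "\<nu> = \<kappa>"
    using rank_one_eigenvalue_eq_if_inner_nonzero[OF u(2) f _ rank_one_u rank_one_f]
      \<open>J u f \<bullet> f = c * c * \<mu>\<close> \<open>c \<noteq> 0\<close> \<open>\<mu> \<noteq> 0\<close> by simp
  ultimately show ?thesis by simp
qed

lemma rank_one_eigenvalue_eq_if_kernel:
  assumes p: "p \<bullet> p = 1" and q: "q \<bullet> q = 1" and "p \<bullet> q = 0" "J p q = 0"
    and rank_one_p: "jacobi_rank_one p \<mu> f" and rank_one_q: "jacobi_rank_one q \<nu> g"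
  shows "\<mu> = \<nu>"
proof -
  define c :: real where "c = 1 / sqrt 2"
  define u where "u = c *\<^sub>R p + c *\<^sub>R q"
  have "c \<noteq> 0" "c * c = 1 / 2" unfolding c_def by (simp_all add: field_simps)
  then have u: "u \<bullet> u = 1"
    unfolding u_def using p q \<open>p \<bullet> q = 0\<close>
      by (simp add: inner_add_left inner_add_right inner_commute algebra_simps)
  obtain \<kappa> h where rank_one_u: "jacobi_rank_one u \<kappa> h" using jacobi_rank_one_exists[OF u] .
  have qp: "q \<bullet> p = 0" using \<open>p \<bullet> q = 0\<close> by (simp add: inner_commute)
  have "J q p = 0" using jacobi_swap_kernel \<open>p \<bullet> q = 0\<close> \<open>J p q = 0\<close> p by force
  moreover have "u = c *\<^sub>R q + c *\<^sub>R p" unfolding u_def by (simp add: add.commute)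
  ultimately have "\<kappa> = \<nu>"
    by (rule rank_one_eigenvalue_eq_in_kernel_plane[OF q p qp _ _ u \<open>c \<noteq> 0\<close> rank_one_q rank_one_u])
  moreover have "\<kappa> = \<mu>"
    by (rule rank_one_eigenvalue_eq_in_kernel_plane[OF p q assms(3,4) u_def u \<open>c \<noteq> 0\<close>
          rank_one_p rank_one_u])
  ultimately show ?thesis by simp
qed

lemma rank_one_eigenvalue_eq_if_orthogonal:
  assumes x: "x \<bullet> x = 1" and w: "w \<bullet> w = 1" and "x \<bullet> w = 0"
    and rank_one_x: "jacobi_rank_one x \<mu> p" and rank_one_w: "jacobi_rank_one w \<nu> q"
  shows "\<mu> = \<nu>"
proof (cases "J x w \<bullet> w = 0")
  case True
  then have "\<mu> * (w \<bullet> p) * (w \<bullet> p) = 0"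
    using jacobi_rank_one_apply[OF rank_one_x, of w] by (simp add: inner_commute)
  then have "J x w = 0"
    using jacobi_rank_one_apply[OF rank_one_x, of w] by simp
  then show ?thesis
    using rank_one_eigenvalue_eq_if_kernel[OF x w \<open>x \<bullet> w = 0\<close> _ rank_one_x rank_one_w] by simp
next
  case False
  then show ?thesis
    by (rule rank_one_eigenvalue_eq_if_inner_nonzero[OF x w \<open>x \<bullet> w = 0\<close> rank_one_x rank_one_w])
qed

lemma rank_one_eigenvalue_const:
  assumes "DIM('a) \<ge> 3" and x: "x \<bullet> x = 1" and w: "w \<bullet> w = 1"
    and rank_one_x: "jacobi_rank_one x \<mu> p" and rank_one_w: "jacobi_rank_one w \<nu> q"
  shows "\<mu> = \<nu>"
proof -
  have "dim {x, w} \<le> card {x, w}" by (rule dim_le_card) (auto intro: span_base)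
  also have "\<dots> < DIM('a)" using assms(1) by (simp add: card_insert_if)
  finally obtain z where "z \<noteq> 0" and z_orth: "\<And>y. y \<in> span {x, w} \<Longrightarrow> orthogonal z y"
    using orthogonal_to_subspace_exists by blast
  define z' where "z' = sgn z"
  have z': "z' \<bullet> z' = 1" unfolding z'_def by (rule inner_sgn_self[OF \<open>z \<noteq> 0\<close>])
  have "z' \<bullet> x = 0" "z' \<bullet> w = 0"
    using z_orth[of x] z_orth[of w] unfolding z'_def
      by (auto simp: span_base orthogonal_def sgn_div_norm)
  obtain \<kappa> h where rank_one_z': "jacobi_rank_one z' \<kappa> h" using jacobi_rank_one_exists[OF z'] .
  have "\<kappa> = \<mu>"
    by (rule rank_one_eigenvalue_eq_if_orthogonal[OF z' x \<open>z' \<bullet> x = 0\<close> rank_one_z' rank_one_x])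
  moreover have "\<kappa> = \<nu>"
    by (rule rank_one_eigenvalue_eq_if_orthogonal[OF z' w \<open>z' \<bullet> w = 0\<close> rank_one_z' rank_one_w])
  ultimately show ?thesis by simp
qed

lemma jacobi_rank_unit_eq_1:
  assumes "x \<bullet> x = 1"
  shows "jacobi_rank R x = 1"
proof -
  obtain \<mu> p where "jacobi_rank_one x \<mu> p" using jacobi_rank_one_exists[OF assms] .
  then have "J x = (\<lambda>v. (\<mu> * (v \<bullet> p)) *\<^sub>R p)" "p \<noteq> 0" "\<mu> \<noteq> 0"
    unfolding jacobi_rank_one_def by auto
  then show ?thesis unfolding jacobi_rank_def by (simp add: rank_one_map_range_dim)
qed

lemma jacobi_eigenspace_dim_const:
  assumes "DIM('a) \<ge> 3" and x: "x \<bullet> x = 1" and y: "y \<bullet> y = 1"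
  shows "dim {v. J x v = c *\<^sub>R v} = dim {v. J y v = c *\<^sub>R v}"
proof -
  obtain \<mu> p where rank_one_x: "jacobi_rank_one x \<mu> p" using jacobi_rank_one_exists[OF x] .
  obtain \<nu> q where rank_one_y: "jacobi_rank_one y \<nu> q" using jacobi_rank_one_exists[OF y] .
  have "\<mu> = \<nu>" by (rule rank_one_eigenvalue_const[OF assms rank_one_x rank_one_y])
  with rank_one_x rank_one_y show ?thesis
    unfolding jacobi_rank_one_def by (simp add: rank_one_map_eigenspace_dim)
qed

end

theorem lemma2p4:
  fixes R :: "'a::euclidean_space \<Rightarrow> 'a \<Rightarrow> 'a \<Rightarrow> 'a \<Rightarrow> real"
  assumes "DIM('a) \<ge> 3"
    and "alg_curv_tensor R"
    and "R \<noteq> (\<lambda>x y z w. 0)"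
    and "jacobi_tsankov R"
    and "\<forall>x. jacobi_rank R x < DIM('a) - 1"
  shows "(\<forall>x\<in>unit_sphere. jacobi_rank R x = 1) \<and> osserman R"
proof -
  interpret low_rank_jacobi_tsankov_tensor R
    using assms(2-5) by unfold_locales
  show ?thesis
  proof
    show "\<forall>x\<in>unit_sphere. jacobi_rank R x = 1"
      using jacobi_rank_unit_eq_1 unfolding unit_sphere_def by blast
    show "osserman R"
      using jacobi_eigenspace_dim_const[OF assms(1)] unfolding osserman_def unit_sphere_def by blast
  qed
qed

end
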